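(* Let $\mathcal{M}_1,\mathcal{M}_2$ be two matroids on the same finite ground set $E$ with $m=|E|$, and let $\textsc{OPT}$ be a maximum-cardinality set independent in both. For a uniformly random order $\pi$ of $E$ and $f\in[0,1]$, let $T_f^\pi$ be the set selected by Greedy after processing the first $fm$ elements of $\pi$, and for $i\in\{1,2\}$ let $\Phi_i(T_f^\pi)=\mathrm{span}_i(T_f^\pi)\cap\textsc{OPT}$. If $0<f,\epsilon\le\frac12$ and $\mathbb{E}_\pi[|T_1^\pi|]\le\left(\frac12+\epsilon\right)|\textsc{OPT}|$, then $$\mathbb{E}_\pi\left[|\Phi_1(T_f^\pi)\cap\Phi_2(T_f^\pi)|\right]\le 2\epsilon|\textsc{OPT}|\quad\text{and}\quad \mathbb{E}_\pi\left[|\Phi_1(T_f^\pi)\cup\Phi_2(T_f^\pi)|\right]\ge\left(1-\frac{2\epsilon}{f}+2\epsilon\right)|\textsc{OPT}|,$$ and consequently $\mathbb{E}_\pi[|T_f^\pi|]/|\textsc{OPT}|\ge \frac12-\left(\frac1f-2\right)\epsilon$.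
   Context: Greedy processes elements in order and adds an element whenever the current set together with it is independent in both $\mathcal{M}_1$ and $\mathcal{M}_2$. $\mathrm{span}_i(T)=\{e\in E:\mathrm{rank}_{\mathcal{M}_i}(T\cup\{e\})=\mathrm{rank}_{\mathcal{M}_i}(T)\}$. *)

theory Defs
  imports Complex_Main "HOL-Combinatorics.Multiset_Permutations"
begin

definition matroid :: "'a set \<Rightarrow> ('a set \<Rightarrow> bool) \<Rightarrow> bool" where
  "matroid E indep \<longleftrightarrow>
     finite E \<and>
     (\<forall>X. indep X \<longrightarrow> X \<subseteq> E) \<and>
     indep {} \<and>
     (\<forall>X Y. indep X \<and> Y \<subseteq> X \<longrightarrow> indep Y) \<and>
     (\<forall>X Y. indep X \<and> indep Y \<and> card X < card Y \<longrightarrow>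
        (\<exists>e \<in> Y - X. indep (insert e X)))"

definition mrank :: "('a set \<Rightarrow> bool) \<Rightarrow> 'a set \<Rightarrow> nat" where
  "mrank indep X = Max (card ` {Y. Y \<subseteq> X \<and> indep Y})"

definition mspan :: "'a set \<Rightarrow> ('a set \<Rightarrow> bool) \<Rightarrow> 'a set \<Rightarrow> 'a set" where
  "mspan E indep T = {e \<in> E. mrank indep (insert e T) = mrank indep T}"

definition greedy :: "('a set \<Rightarrow> bool) \<Rightarrow> ('a set \<Rightarrow> bool) \<Rightarrow> 'a list \<Rightarrow> 'a set" where
  "greedy I1 I2 xs =
     foldl (\<lambda>T e. if I1 (insert e T) \<and> I2 (insert e T) then insert e T else T) {} xs"

definition greedy_at :: "('a set \<Rightarrow> bool) \<Rightarrow> ('a set \<Rightarrow> bool) \<Rightarrow> real \<Rightarrow> 'a list \<Rightarrow> 'a set" where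
  "greedy_at I1 I2 f \<pi> = greedy I1 I2 (take (nat \<lceil>f * real (length \<pi>)\<rceil>) \<pi>)"

definition exp_order :: "'a set \<Rightarrow> ('a list \<Rightarrow> real) \<Rightarrow> real" where
  "exp_order E g = (\<Sum>\<pi>\<in>permutations_of_set E. g \<pi>) / real (card (permutations_of_set E))"

end

theory Submission
  imports Defs
begin

text \<open>Let \<open>T\<close> be Greedy's set after the first \<open>f m\<close> elements of the order and \<open>G\<close> its final
  set. Every element of OPT is spanned by \<open>G\<close> in one of the two matroids, and an independent set
  inside a span of \<open>G\<close> has at most \<open>|G|\<close> elements; hence at most \<open>2|G| - |OPT|\<close> elements of OPT
  are spanned by \<open>G\<close>, and a fortiori by \<open>T \<subseteq> G\<close>, in both matroids. An element \<open>e\<close> of OPT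
  spanned by \<open>T\<close> in neither matroid cannot have been processed yet, and Greedy would have picked
  it at any of the first \<open>f m\<close> positions. Averaging over the position of \<open>e\<close> in the random order
  gives, in expectation, \<open>f |OPT - (\<Phi>\<^sub>1 \<union> \<Phi>\<^sub>2)| \<le> (1 - f) |OPT \<inter> T|\<close>, and
  \<open>OPT \<inter> T \<subseteq> \<Phi>\<^sub>1 \<inter> \<Phi>\<^sub>2\<close>.
  Together with \<open>|\<Phi>\<^sub>1 \<union> \<Phi>\<^sub>2| + |\<Phi>\<^sub>1 \<inter> \<Phi>\<^sub>2| \<le> 2|T|\<close> the three bounds follow by linear
  arithmetic.\<close>

section \<open>Matroids: rank and span\<close>

lemma matroid_finite: "matroid E I \<Longrightarrow> finite E"
  by (simp add: matroid_def)

lemma matroid_indep_subset: "matroid E I \<Longrightarrow> I X \<Longrightarrow> X \<subseteq> E"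
  by (simp add: matroid_def)

lemma matroid_indep_empty: "matroid E I \<Longrightarrow> I {}"
  by (simp add: matroid_def)

lemma matroid_indep_mono: "matroid E I \<Longrightarrow> I X \<Longrightarrow> Y \<subseteq> X \<Longrightarrow> I Y"
  by (simp add: matroid_def)

lemma matroid_augment:
  "matroid E I \<Longrightarrow> I X \<Longrightarrow> I Y \<Longrightarrow> card X < card Y \<Longrightarrow> \<exists>e\<in>Y - X. I (insert e X)"
  by (simp add: matroid_def)

lemma matroid_indep_finite: "matroid E I \<Longrightarrow> I X \<Longrightarrow> finite X"
  by (meson matroid_finite matroid_indep_subset finite_subset)

lemma mrank_eqI:
  assumes "finite X" and "Y \<subseteq> X" and "I Y"
    and "\<And>Z. Z \<subseteq> X \<Longrightarrow> I Z \<Longrightarrow> card Z \<le> card Y"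
  shows "mrank I X = card Y"
  unfolding mrank_def
proof (rule Max_eqI)
  show "finite (card ` {Y. Y \<subseteq> X \<and> I Y})" using assms(1) by simp
  show "card Y \<in> card ` {Y. Y \<subseteq> X \<and> I Y}" using assms(2,3) by blast
qed (use assms(4) in auto)

lemma mrank_indep:
  assumes "matroid E I" and "I T"
  shows "mrank I T = card T"
  using assms matroid_indep_finite by (intro mrank_eqI) (auto intro: card_mono)

lemma mrank_insert_dependent:
  assumes M: "matroid E I" and T: "I T" and dep: "\<not> I (insert e T)"
  shows "mrank I (insert e T) = card T"
proof (rule mrank_eqI)
  show "finite (insert e T)" using matroid_indep_finite[OF M T] by simp
  fix Z assume Z: "Z \<subseteq> insert e T" "I Z"
  show "card Z \<le> card T"
  proof (rule ccontr)
    assume "\<not> card Z \<le> card T"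
    then obtain x where "x \<in> Z - T" "I (insert x T)"
      using matroid_augment[OF M T Z(2)] by auto
    with Z dep show False by auto
  qed
qed (use T in auto)

lemma mem_mspan_iff:
  assumes M: "matroid E I" and T: "I T"
  shows "e \<in> mspan E I T \<longleftrightarrow> e \<in> E \<and> (e \<in> T \<or> \<not> I (insert e T))"
proof (cases "e \<in> T")
  case True
  then show ?thesis by (auto simp: mspan_def insert_absorb)
next
  case False
  show ?thesis
  proof (cases "I (insert e T)")
    case True
    then have "mrank I (insert e T) = Suc (card T)"
      using mrank_indep[OF M] False matroid_indep_finite[OF M T] by simp
    then show ?thesis using False True mrank_indep[OF M T] by (auto simp: mspan_def)
  next
    case dep: False
    then show ?thesis
      using False mrank_insert_dependent[OF M T dep] mrank_indep[OF M T] by (auto simp: mspan_def)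
  qed
qed

lemma subset_mspan:
  assumes "matroid E I" and "I T"
  shows "T \<subseteq> mspan E I T"
  using mem_mspan_iff[OF assms] matroid_indep_subset[OF assms] by blast

lemma mspan_mono:
  assumes M: "matroid E I" and "I T'" and "T \<subseteq> T'"
  shows "mspan E I T \<subseteq> mspan E I T'"
proof -
  have T: "I T" using matroid_indep_mono[OF M assms(2,3)] .
  have "I (insert e T') \<Longrightarrow> I (insert e T)" for e
    using matroid_indep_mono[OF M] assms(3) by blast
  then show ?thesis using mem_mspan_iff[OF M T] mem_mspan_iff[OF M assms(2)] assms(3) by blast
qed

lemma card_mspan_Int_indep_le:
  assumes M: "matroid E I" and T: "I T" and X: "I X"
  shows "card (mspan E I T \<inter> X) \<le> card T"
proof (rule ccontr)
  have "I (mspan E I T \<inter> X)" using matroid_indep_mono[OF M X] by blast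
  moreover assume "\<not> card (mspan E I T \<inter> X) \<le> card T"
  ultimately obtain x where "x \<in> mspan E I T - T" "I (insert x T)"
    using matroid_augment[OF M T] by force
  then show False using mem_mspan_iff[OF M T] by auto
qed

lemma card_Un_Int_mspan_le:
  assumes M1: "matroid E I1" and M2: "matroid E I2"
    and "I1 T" "I2 T" "I1 X" "I2 X"
  shows "card ((mspan E I1 T \<inter> X) \<union> (mspan E I2 T \<inter> X))
           + card ((mspan E I1 T \<inter> X) \<inter> (mspan E I2 T \<inter> X)) \<le> 2 * card T"
proof -
  have "finite X" using matroid_indep_finite[OF M1 assms(5)] .
  then have "card (mspan E I1 T \<inter> X) + card (mspan E I2 T \<inter> X)
      = card ((mspan E I1 T \<inter> X) \<union> (mspan E I2 T \<inter> X))
        + card ((mspan E I1 T \<inter> X) \<inter> (mspan E I2 T \<inter> X))"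
    by (intro card_Un_Int) auto
  then show ?thesis
    using card_mspan_Int_indep_le[OF M1 assms(3,5)] card_mspan_Int_indep_le[OF M2 assms(4,6)]
    by linarith
qed

section \<open>Greedy\<close>

definition greedy_step :: "('a set \<Rightarrow> bool) \<Rightarrow> ('a set \<Rightarrow> bool) \<Rightarrow> 'a set \<Rightarrow> 'a \<Rightarrow> 'a set" where
  "greedy_step I1 I2 T e = (if I1 (insert e T) \<and> I2 (insert e T) then insert e T else T)"

lemma greedy_foldl: "greedy I1 I2 xs = foldl (greedy_step I1 I2) {} xs"
  unfolding greedy_def greedy_step_def by (rule refl)

lemma subset_foldl_greedy_step: "T \<subseteq> foldl (greedy_step I1 I2) T xs"
proof (induction xs arbitrary: T)
  case (Cons x xs)
  have "T \<subseteq> greedy_step I1 I2 T x" by (auto simp: greedy_step_def)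
  with Cons.IH show ?case by (auto intro: order_trans)
qed simp

lemma foldl_greedy_step_indep:
  "I1 T \<Longrightarrow> I2 T \<Longrightarrow> I1 (foldl (greedy_step I1 I2) T xs) \<and> I2 (foldl (greedy_step I1 I2) T xs)"
  by (induction xs arbitrary: T) (auto simp: greedy_step_def)

lemma greedy_append: "greedy I1 I2 (xs @ ys) = foldl (greedy_step I1 I2) (greedy I1 I2 xs) ys"
  by (simp add: greedy_foldl)

lemma greedy_indep:
  assumes "matroid E I1" and "matroid E I2"
  shows "I1 (greedy I1 I2 xs)" and "I2 (greedy I1 I2 xs)"
  using foldl_greedy_step_indep[of I1 "{}" I2 xs] matroid_indep_empty[OF assms(1)]
    matroid_indep_empty[OF assms(2)]
  by (simp_all add: greedy_foldl)

lemma greedy_take_subset: "greedy I1 I2 (take k xs) \<subseteq> greedy I1 I2 xs"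
  by (metis append_take_drop_id greedy_append subset_foldl_greedy_step)

lemma greedy_take_mono: "i \<le> j \<Longrightarrow> greedy I1 I2 (take i xs) \<subseteq> greedy I1 I2 (take j xs)"
  using greedy_take_subset[of I1 I2 i "take j xs"] by (simp add: min_absorb1)

lemma greedy_step_subset_greedy:
  "greedy_step I1 I2 (greedy I1 I2 xs) e \<subseteq> greedy I1 I2 (xs @ e # ys)"
  by (simp add: greedy_append subset_foldl_greedy_step)

lemma greedy_spans:
  assumes M1: "matroid E I1" and M2: "matroid E I2" and e: "e \<in> E" "e \<in> set xs"
  shows "e \<in> mspan E I1 (greedy I1 I2 xs) \<union> mspan E I2 (greedy I1 I2 xs)"
proof -
  obtain ys zs where xs: "xs = ys @ e # zs" using split_list[OF e(2)] by blast
  let ?H = "greedy I1 I2 ys" and ?G = "greedy I1 I2 xs"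
  have HG: "?H \<subseteq> ?G"
    using greedy_step_subset_greedy[of I1 I2 ys e zs] by (auto simp: xs greedy_step_def split: if_splits)
  have "e \<in> ?G \<or> \<not> I1 (insert e ?G) \<or> \<not> I2 (insert e ?G)"
  proof (cases "I1 (insert e ?H) \<and> I2 (insert e ?H)")
    case True
    then show ?thesis using greedy_step_subset_greedy[of I1 I2 ys e zs] by (auto simp: xs greedy_step_def)
  next
    case False
    then show ?thesis using matroid_indep_mono[OF M1] matroid_indep_mono[OF M2] HG
      by (meson insert_mono)
  qed
  then show ?thesis
    using e(1) mem_mspan_iff[OF M1 greedy_indep(1)[OF M1 M2]] mem_mspan_iff[OF M2 greedy_indep(2)[OF M1 M2]]
    by blast
qed

lemma card_doubly_spanned_greedy_take_le:
  assumes M1: "matroid E I1" and M2: "matroid E I2" and X: "I1 X" "I2 X" "X \<subseteq> set xs"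
  shows "card ((mspan E I1 (greedy I1 I2 (take k xs)) \<inter> X) \<inter> (mspan E I2 (greedy I1 I2 (take k xs)) \<inter> X))
           + card X \<le> 2 * card (greedy I1 I2 xs)"
proof -
  let ?T = "greedy I1 I2 (take k xs)" and ?G = "greedy I1 I2 xs"
  have G: "I1 ?G" "I2 ?G" by (rule greedy_indep[OF M1 M2])+
  have "X \<subseteq> mspan E I1 ?G \<union> mspan E I2 ?G"
  proof
    fix e assume "e \<in> X"
    then show "e \<in> mspan E I1 ?G \<union> mspan E I2 ?G"
      using greedy_spans[OF M1 M2, of e xs] matroid_indep_subset[OF M1 X(1)] X(3) by blast
  qed
  then have cover: "(mspan E I1 ?G \<inter> X) \<union> (mspan E I2 ?G \<inter> X) = X" by blast
  have "mspan E I1 ?T \<subseteq> mspan E I1 ?G" "mspan E I2 ?T \<subseteq> mspan E I2 ?G"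
    by (rule mspan_mono[OF M1 G(1) greedy_take_subset] mspan_mono[OF M2 G(2) greedy_take_subset])+
  then have mono: "card ((mspan E I1 ?T \<inter> X) \<inter> (mspan E I2 ?T \<inter> X))
      \<le> card ((mspan E I1 ?G \<inter> X) \<inter> (mspan E I2 ?G \<inter> X))"
    using matroid_indep_finite[OF M1 X(1)] by (intro card_mono) auto
  show ?thesis using mono card_Un_Int_mspan_le[OF M1 M2 G X(1,2)] unfolding cover by linarith
qed

section \<open>Inserting an element into an order\<close>

definition insert_at :: "nat \<Rightarrow> 'a \<Rightarrow> 'a list \<Rightarrow> 'a list" where
  "insert_at j e r = take j r @ e # drop j r"

lemma set_insert_at [simp]: "set (insert_at j e r) = insert e (set r)"
  by (metis insert_at_def append_take_drop_id list.simps(15) set_append Un_insert_right)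

lemma distinct_insert_at [simp]: "distinct (insert_at j e r) \<longleftrightarrow> e \<notin> set r \<and> distinct r"
proof -
  have "distinct (insert_at j e r)
      \<longleftrightarrow> e \<notin> set (take j r @ drop j r) \<and> distinct (take j r @ drop j r)"
    by (auto simp: insert_at_def simp del: append_take_drop_id)
  then show ?thesis by simp
qed

lemma insert_at_inject:
  assumes "e \<notin> set r" "e \<notin> set r'" "j \<le> length r" "j' \<le> length r'"
    and "insert_at j e r = insert_at j' e r'"
  shows "r = r' \<and> j = j'"
proof -
  have "e \<notin> set (take j r)" "e \<notin> set (drop j r)"
    using assms(1) by (meson in_set_takeD in_set_dropD)+
  then have "take j r = take j' r'" "drop j r = drop j' r'"
    using assms(5) append_Cons_eq_iff by (metis insert_at_def)+
  moreover from this(1) have "j = j'"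
    using assms(3,4) by (metis length_take min_absorb2)
  ultimately show ?thesis by (metis append_take_drop_id)
qed

lemma length_permutation_remove:
  assumes "finite E" "e \<in> E" "r \<in> permutations_of_set (E - {e})"
  shows "Suc (length r) = card E"
  using length_finite_permutations_of_set[OF assms(3)] card_Suc_Diff1[OF assms(1,2)] by simp

lemma bij_betw_insert_at:
  assumes fin: "finite E" and e: "e \<in> E"
  shows "bij_betw (\<lambda>(r, j). insert_at j e r)
           (permutations_of_set (E - {e}) \<times> {..<card E}) (permutations_of_set E)"
proof (rule bij_betwI')
  fix x y assume x: "x \<in> permutations_of_set (E - {e}) \<times> {..<card E}"
    and y: "y \<in> permutations_of_set (E - {e}) \<times> {..<card E}"
  obtain r j r' j' where xy: "x = (r, j)" "y = (r', j')" by fastforce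
  have "e \<notin> set r" "e \<notin> set r'"
    using x y by (auto simp: xy permutations_of_set_def)
  moreover have "j \<le> length r" "j' \<le> length r'"
    using x y length_permutation_remove[OF fin e] by (fastforce simp: xy)+
  ultimately show "((\<lambda>(r, j). insert_at j e r) x = (\<lambda>(r, j). insert_at j e r) y) = (x = y)"
    using insert_at_inject[of e r r' j j'] by (auto simp: xy)
next
  fix x assume x: "x \<in> permutations_of_set (E - {e}) \<times> {..<card E}"
  obtain r j where xr: "x = (r, j)" by fastforce
  have "set r = E - {e}" "distinct r" using x by (auto simp: xr permutations_of_set_def)
  then show "(\<lambda>(r, j). insert_at j e r) x \<in> permutations_of_set E"
    using e by (auto simp: xr permutations_of_set_def)
next
  fix p assume p: "p \<in> permutations_of_set E"
  then have "e \<in> set p" using e by (simp add: permutations_of_set_def)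
  then obtain xs ys where xs: "p = xs @ e # ys" "e \<notin> set xs"
    using split_list_first[of e p] by blast
  have "xs @ ys \<in> permutations_of_set (E - {e})"
    using p xs(1) by (auto simp: permutations_of_set_def)
  moreover have "length xs < card E"
    using length_finite_permutations_of_set[OF p] xs(1) by simp
  moreover have "p = insert_at (length xs) e (xs @ ys)" by (simp add: insert_at_def xs)
  ultimately show "\<exists>x\<in>permutations_of_set (E - {e}) \<times> {..<card E}. p = (\<lambda>(r, j). insert_at j e r) x"
    by auto
qed

lemma sum_permutations_insert_at:
  assumes "finite E" and "e \<in> E"
  shows "(\<Sum>p\<in>permutations_of_set E. g p)
       = (\<Sum>r\<in>permutations_of_set (E - {e}). \<Sum>j<card E. g (insert_at j e r))"
  using sum.reindex_bij_betw[OF bij_betw_insert_at[OF assms], of g]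
  by (simp add: sum.cartesian_product split_def)

lemma take_insert_at_less:
  "i < k \<Longrightarrow> i \<le> length r \<Longrightarrow> take k (insert_at i e r) = take i r @ e # take (k - Suc i) (drop i r)"
  by (simp add: insert_at_def take_append min_def take_Cons')

lemma take_insert_at_ge: "k \<le> j \<Longrightarrow> j \<le> length r \<Longrightarrow> take k (insert_at j e r) = take k r"
  by (simp add: insert_at_def take_append min_def)

section \<open>Charging the unspanned elements\<close>

lemma take_insert_at_not_spanned:
  assumes M1: "matroid E I1" and M2: "matroid E I2" and e: "e \<in> E" and j: "j \<le> length r"
    and unspanned: "e \<notin> mspan E I1 (greedy I1 I2 (take k (insert_at j e r)))
                          \<union> mspan E I2 (greedy I1 I2 (take k (insert_at j e r)))"
  shows "k \<le> j"
proof (rule ccontr)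
  assume "\<not> k \<le> j"
  then have "e \<in> set (take k (insert_at j e r))" by (simp add: take_insert_at_less j)
  with greedy_spans[OF M1 M2 e] unspanned show False by blast
qed

lemma greedy_take_insert_at_picks:
  assumes M1: "matroid E I1" and M2: "matroid E I2"
    and unspanned: "e \<notin> mspan E I1 (greedy I1 I2 (take k r)) \<union> mspan E I2 (greedy I1 I2 (take k r))"
    and e: "e \<in> E" and i: "i < k" "i \<le> length r"
  shows "e \<in> greedy I1 I2 (take k (insert_at i e r))"
proof -
  let ?G = "greedy I1 I2 (take k r)" and ?H = "greedy I1 I2 (take i r)"
  have "I1 (insert e ?G)"
    using unspanned e mem_mspan_iff[OF M1 greedy_indep(1)[OF M1 M2], of e] by blast
  moreover have "I2 (insert e ?G)"
    using unspanned e mem_mspan_iff[OF M2 greedy_indep(2)[OF M1 M2], of e] by blast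
  moreover have "insert e ?H \<subseteq> insert e ?G" using greedy_take_mono[of i k I1 I2 r] i(1) by auto
  ultimately have "I1 (insert e ?H)" "I2 (insert e ?H)"
    using matroid_indep_mono[OF M1] matroid_indep_mono[OF M2] by blast+
  then have "e \<in> greedy_step I1 I2 ?H e" by (simp add: greedy_step_def)
  then show ?thesis
    using greedy_step_subset_greedy[of I1 I2 "take i r" e] by (auto simp: take_insert_at_less i)
qed

lemma card_unspanned_positions_le:
  assumes M1: "matroid E I1" and M2: "matroid E I2" and e: "e \<in> E" and k: "k \<le> Suc (length r)"
  shows "k * card {j\<in>{..<Suc (length r)}.
              e \<notin> mspan E I1 (greedy I1 I2 (take k (insert_at j e r)))
                   \<union> mspan E I2 (greedy I1 I2 (take k (insert_at j e r)))}
       \<le> (Suc (length r) - k) * card {i\<in>{..<Suc (length r)}. e \<in> greedy I1 I2 (take k (insert_at i e r))}"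
  (is "k * card ?A \<le> (?m - k) * card ?B")
proof (cases "?A = {}")
  case False
  then obtain j where j: "j \<in> ?A" by blast
  have A: "?A \<subseteq> {k..<?m}"
  proof
    fix x assume "x \<in> ?A"
    then show "x \<in> {k..<?m}" using take_insert_at_not_spanned[OF M1 M2 e, of x r k] by auto
  qed
  have cardA: "card ?A \<le> ?m - k" using card_mono[OF _ A] by simp
  have B: "{..<k} \<subseteq> ?B"
  proof
    fix i assume i: "i \<in> {..<k}"
    have j': "j \<le> length r" "k \<le> j" using j take_insert_at_not_spanned[OF M1 M2 e, of j r k] by auto
    then have "e \<notin> mspan E I1 (greedy I1 I2 (take k r)) \<union> mspan E I2 (greedy I1 I2 (take k r))"
      using j take_insert_at_ge[of k j r e] by simp
    then show "i \<in> ?B"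
      using i j' greedy_take_insert_at_picks[OF M1 M2 _ e, of k r i] by simp
  qed
  then have "k \<le> card ?B" using card_mono[OF _ B] by simp
  from mult_le_mono[OF this cardA] show ?thesis by (simp only: mult.commute)
next
  case True
  then show ?thesis by (simp only: card.empty mult_0_right zero_le)
qed

lemma sum_card_filter_permutations:
  assumes "finite E" and "X \<subseteq> E"
  shows "(\<Sum>p\<in>permutations_of_set E. card {e\<in>X. Q p e})
       = (\<Sum>e\<in>X. \<Sum>r\<in>permutations_of_set (E - {e}). card {j\<in>{..<card E}. Q (insert_at j e r) e})"
proof -
  have X: "finite X" using assms finite_subset by blast
  have count: "card {x\<in>A. P x} = (\<Sum>x\<in>A. if P x then 1 else 0)" if "finite A" for A :: "'b set" and P
    using that by (simp add: sum.If_cases Int_def)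
  have "(\<Sum>p\<in>permutations_of_set E. card {e\<in>X. Q p e})
      = (\<Sum>p\<in>permutations_of_set E. \<Sum>e\<in>X. if Q p e then 1 else 0)"
    using count[OF X] by simp
  also have "\<dots> = (\<Sum>e\<in>X. \<Sum>p\<in>permutations_of_set E. if Q p e then 1 else 0)"
    by (rule sum.swap)
  also have "\<dots> = (\<Sum>e\<in>X. \<Sum>r\<in>permutations_of_set (E - {e}). \<Sum>j<card E. if Q (insert_at j e r) e then 1 else 0)"
    using assms by (intro sum.cong refl sum_permutations_insert_at) auto
  also have "\<dots> = (\<Sum>e\<in>X. \<Sum>r\<in>permutations_of_set (E - {e}). card {j\<in>{..<card E}. Q (insert_at j e r) e})"
    using count[of "{..<card E}"] by simp
  finally show ?thesis .
qed

lemma sum_card_unspanned_le: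
  assumes M1: "matroid E I1" and M2: "matroid E I2" and X: "X \<subseteq> E" and k: "k \<le> card E"
  shows "k * (\<Sum>p\<in>permutations_of_set E.
              card (X - (mspan E I1 (greedy I1 I2 (take k p)) \<union> mspan E I2 (greedy I1 I2 (take k p)))))
       \<le> (card E - k) * (\<Sum>p\<in>permutations_of_set E. card (X \<inter> greedy I1 I2 (take k p)))"
proof -
  have fin: "finite E" using matroid_finite[OF M1] .
  have sets: "X - A = {e\<in>X. e \<notin> A}" "X \<inter> B = {e\<in>X. e \<in> B}" for A B by blast+
  have bound: "k * card {j\<in>{..<card E}.
              e \<notin> mspan E I1 (greedy I1 I2 (take k (insert_at j e r)))
                   \<union> mspan E I2 (greedy I1 I2 (take k (insert_at j e r)))}
       \<le> (card E - k) * card {i\<in>{..<card E}. e \<in> greedy I1 I2 (take k (insert_at i e r))}"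
    if "e \<in> X" "r \<in> permutations_of_set (E - {e})" for e r
  proof -
    have "Suc (length r) = card E" using length_permutation_remove[OF fin _ that(2)] that(1) X by blast
    then show ?thesis using card_unspanned_positions_le[OF M1 M2, of e k r] that(1) X k by auto
  qed
  show ?thesis
    unfolding sets sum_card_filter_permutations[OF fin X] sum_distrib_left
    by (intro sum_mono bound)
qed

section \<open>Expectations over a random order\<close>

lemma exp_order_mono:
  "(\<And>p. p \<in> permutations_of_set E \<Longrightarrow> g p \<le> h p) \<Longrightarrow> exp_order E g \<le> exp_order E h"
  unfolding exp_order_def by (intro divide_right_mono sum_mono) auto

lemma exp_order_add: "exp_order E (\<lambda>p. g p + h p) = exp_order E g + exp_order E h"
  by (simp add: exp_order_def sum.distrib add_divide_distrib)

lemma exp_order_mult_left: "exp_order E (\<lambda>p. c * g p) = c * exp_order E g"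
  by (simp add: exp_order_def sum_distrib_left)

lemma exp_order_const: "finite E \<Longrightarrow> exp_order E (\<lambda>_. c) = c"
  by (simp add: exp_order_def)

lemma greedy_at_permutation:
  assumes "p \<in> permutations_of_set E"
  shows "greedy_at I1 I2 f p = greedy I1 I2 (take (nat \<lceil>f * real (card E)\<rceil>) p)"
  using length_finite_permutations_of_set[OF assms] by (simp add: greedy_at_def)

lemma greedy_at_one: "greedy_at I1 I2 1 p = greedy I1 I2 p"
  by (simp add: greedy_at_def)

lemma exp_order_unspanned_le:
  assumes M1: "matroid E I1" and M2: "matroid E I2" and X: "X \<subseteq> E" and f: "0 < f" "f \<le> 1"
  shows "f * exp_order E (\<lambda>p. real (card
            (X - (mspan E I1 (greedy_at I1 I2 f p) \<union> mspan E I2 (greedy_at I1 I2 f p)))))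
       \<le> (1 - f) * exp_order E (\<lambda>p. real (card (X \<inter> greedy_at I1 I2 f p)))"
proof -
  have fin: "finite E" using matroid_finite[OF M1] .
  define m where "m = card E"
  define k where "k = nat \<lceil>f * real m\<rceil>"
  have fk: "f * real m \<le> real k" unfolding k_def by (rule real_nat_ceiling_ge)
  have "k \<le> m"
    unfolding k_def using mult_right_mono[OF f(2), of "real m"] by (simp add: nat_le_iff ceiling_le_iff)
  define U where "U = (\<Sum>p\<in>permutations_of_set E.
      card (X - (mspan E I1 (greedy I1 I2 (take k p)) \<union> mspan E I2 (greedy I1 I2 (take k p)))))"
  define V where "V = (\<Sum>p\<in>permutations_of_set E. card (X \<inter> greedy I1 I2 (take k p)))"
  have "k * U \<le> (m - k) * V"
    unfolding U_def V_def m_def using sum_card_unspanned_le[OF M1 M2 X] \<open>k \<le> m\<close> m_def by blast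
  then have charge: "real k * real U \<le> (real m - real k) * real V"
    using \<open>k \<le> m\<close> by (metis of_nat_diff of_nat_le_iff of_nat_mult)
  have "f * real U \<le> (1 - f) * real V"
  proof (cases "m = 0")
    case True
    then have "X = {}" using X fin m_def by auto
    then show ?thesis using f(2) by (simp add: U_def)
  next
    case False
    have "real m * (f * (real U + real V)) \<le> real k * (real U + real V)"
      using mult_right_mono[OF fk, of "real U + real V"] by (simp add: algebra_simps)
    also have "\<dots> \<le> real m * real V" using charge by (simp add: algebra_simps)
    finally have "f * (real U + real V) \<le> real V" using False by simp
    then show ?thesis by (simp add: algebra_simps)
  qed
  moreover have "exp_order E (\<lambda>p. real (card
            (X - (mspan E I1 (greedy_at I1 I2 f p) \<union> mspan E I2 (greedy_at I1 I2 f p)))))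
      = real U / real (card (permutations_of_set E))"
    and "exp_order E (\<lambda>p. real (card (X \<inter> greedy_at I1 I2 f p)))
      = real V / real (card (permutations_of_set E))"
    unfolding exp_order_def U_def V_def k_def m_def
    by (simp_all add: greedy_at_permutation cong: sum.cong)
  ultimately show ?thesis
    using divide_right_mono[of "f * real U" "(1 - f) * real V" "real (card (permutations_of_set E))"]
    by simp
qed

lemma exp_order_doubly_spanned_le:
  assumes M1: "matroid E I1" and M2: "matroid E I2" and X: "I1 X" "I2 X"
  shows "exp_order E (\<lambda>p. real (card ((mspan E I1 (greedy_at I1 I2 f p) \<inter> X)
                                      \<inter> (mspan E I2 (greedy_at I1 I2 f p) \<inter> X))))
           + real (card X)
         \<le> 2 * exp_order E (\<lambda>p. real (card (greedy_at I1 I2 1 p)))"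
proof -
  have "real (card ((mspan E I1 (greedy_at I1 I2 f p) \<inter> X) \<inter> (mspan E I2 (greedy_at I1 I2 f p) \<inter> X)))
      + real (card X) \<le> 2 * real (card (greedy_at I1 I2 1 p))"
    if "p \<in> permutations_of_set E" for p
  proof -
    have "X \<subseteq> set p"
      using matroid_indep_subset[OF M1 X(1)] permutations_of_setD(1)[OF that] by simp
    from card_doubly_spanned_greedy_take_le[OF M1 M2 X this]
    have "card ((mspan E I1 (greedy_at I1 I2 f p) \<inter> X) \<inter> (mspan E I2 (greedy_at I1 I2 f p) \<inter> X))
        + card X \<le> 2 * card (greedy_at I1 I2 1 p)"
      unfolding greedy_at_one by (simp add: greedy_at_def)
    then show ?thesis by (metis of_nat_add of_nat_le_iff of_nat_mult of_nat_numeral)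
  qed
  then have "exp_order E (\<lambda>p. real (card ((mspan E I1 (greedy_at I1 I2 f p) \<inter> X)
                                      \<inter> (mspan E I2 (greedy_at I1 I2 f p) \<inter> X))) + real (card X))
      \<le> exp_order E (\<lambda>p. 2 * real (card (greedy_at I1 I2 1 p)))"
    by (rule exp_order_mono)
  then show ?thesis
    by (simp only: exp_order_add exp_order_mult_left exp_order_const matroid_finite[OF M1])
qed

lemma exp_order_spanned_plus_unspanned:
  assumes "finite E" and "finite X"
  shows "exp_order E (\<lambda>p. real (card ((A p \<inter> X) \<union> (B p \<inter> X))))
           + exp_order E (\<lambda>p. real (card (X - (A p \<union> B p)))) = real (card X)"
proof -
  have "card ((A p \<inter> X) \<union> (B p \<inter> X)) + card (X - (A p \<union> B p)) = card X" for p
  proof -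
    have "(A p \<inter> X) \<union> (B p \<inter> X) = X \<inter> (A p \<union> B p)" by blast
    then show ?thesis using card_Int_Diff[OF assms(2), of "A p \<union> B p"] by simp
  qed
  then have "exp_order E (\<lambda>p. real (card ((A p \<inter> X) \<union> (B p \<inter> X))) + real (card (X - (A p \<union> B p))))
      = exp_order E (\<lambda>_. real (card X))"
    by (metis of_nat_add)
  then show ?thesis by (simp only: exp_order_add exp_order_const assms(1))
qed

lemma exp_order_picked_le_doubly_spanned:
  assumes M1: "matroid E I1" and M2: "matroid E I2" and X: "finite X"
  shows "exp_order E (\<lambda>p. real (card (X \<inter> greedy_at I1 I2 f p)))
         \<le> exp_order E (\<lambda>p. real (card ((mspan E I1 (greedy_at I1 I2 f p) \<inter> X)
                                          \<inter> (mspan E I2 (greedy_at I1 I2 f p) \<inter> X))))"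
proof (rule exp_order_mono)
  fix p
  let ?T = "greedy_at I1 I2 f p"
  have "?T \<subseteq> mspan E I1 ?T" "?T \<subseteq> mspan E I2 ?T"
    unfolding greedy_at_def by (rule subset_mspan[OF M1 greedy_indep(1)[OF M1 M2]]
        subset_mspan[OF M2 greedy_indep(2)[OF M1 M2]])+
  then have "X \<inter> ?T \<subseteq> (mspan E I1 ?T \<inter> X) \<inter> (mspan E I2 ?T \<inter> X)" by blast
  then show "real (card (X \<inter> ?T)) \<le> real (card ((mspan E I1 ?T \<inter> X) \<inter> (mspan E I2 ?T \<inter> X)))"
    using X by (simp add: card_mono)
qed

lemma exp_order_Un_Int_mspan_le:
  assumes M1: "matroid E I1" and M2: "matroid E I2" and X: "I1 X" "I2 X"
  shows "exp_order E (\<lambda>p. real (card ((mspan E I1 (greedy_at I1 I2 f p) \<inter> X)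
                                      \<union> (mspan E I2 (greedy_at I1 I2 f p) \<inter> X))))
           + exp_order E (\<lambda>p. real (card ((mspan E I1 (greedy_at I1 I2 f p) \<inter> X)
                                      \<inter> (mspan E I2 (greedy_at I1 I2 f p) \<inter> X))))
         \<le> 2 * exp_order E (\<lambda>p. real (card (greedy_at I1 I2 f p)))"
proof -
  have "card ((mspan E I1 (greedy_at I1 I2 f p) \<inter> X) \<union> (mspan E I2 (greedy_at I1 I2 f p) \<inter> X))
      + card ((mspan E I1 (greedy_at I1 I2 f p) \<inter> X) \<inter> (mspan E I2 (greedy_at I1 I2 f p) \<inter> X))
      \<le> 2 * card (greedy_at I1 I2 f p)" for p
    unfolding greedy_at_def by (rule card_Un_Int_mspan_le[OF M1 M2 greedy_indep[OF M1 M2] X])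
  then have "exp_order E (\<lambda>p. real (card ((mspan E I1 (greedy_at I1 I2 f p) \<inter> X)
                                      \<union> (mspan E I2 (greedy_at I1 I2 f p) \<inter> X)))
          + real (card ((mspan E I1 (greedy_at I1 I2 f p) \<inter> X)
                                      \<inter> (mspan E I2 (greedy_at I1 I2 f p) \<inter> X))))
      \<le> exp_order E (\<lambda>p. 2 * real (card (greedy_at I1 I2 f p)))"
    by (intro exp_order_mono) (metis of_nat_add of_nat_le_iff of_nat_mult of_nat_numeral)
  then show ?thesis by (simp only: exp_order_add exp_order_mult_left)
qed

lemma greedy_bounds_arith:
  fixes x y z w u v n f \<epsilon> :: real
  assumes double: "x + n \<le> 2 * w" and half: "w \<le> (1/2 + \<epsilon>) * n"
    and cover: "y + u = n" and picked: "v \<le> x" and Un_Int: "y + x \<le> 2 * z"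
    and charging: "f * u \<le> (1 - f) * v" and f: "0 < f" "f \<le> 1/2"
  shows "x \<le> 2 * \<epsilon> * n" and "(1 - 2 * \<epsilon> / f + 2 * \<epsilon>) * n \<le> y"
    and "(1/2 - (1/f - 2) * \<epsilon>) * n \<le> z"
proof -
  have "2 * w \<le> n + 2 * \<epsilon> * n" using half by (simp add: algebra_simps)
  then show x: "x \<le> 2 * \<epsilon> * n" using double by linarith
  have "f * u \<le> (1 - f) * x"
    using charging mult_left_mono[OF picked, of "1 - f"] f(2) by linarith
  moreover have "(1 - f) * x \<le> (1 - f) * (2 * \<epsilon> * n)" and "(1 - 2 * f) * x \<le> (1 - 2 * f) * (2 * \<epsilon> * n)"
    using mult_left_mono[OF x] f(2) by simp_all
  moreover have "f * ((1 - 2 * \<epsilon> / f + 2 * \<epsilon>) * n) = f * n - (1 - f) * (2 * \<epsilon> * n)"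
    and "f * (2 * ((1/2 - (1/f - 2) * \<epsilon>) * n)) = f * n - (1 - 2 * f) * (2 * \<epsilon> * n)"
    using f(1) by (simp_all add: field_simps)
  ultimately have "f * ((1 - 2 * \<epsilon> / f + 2 * \<epsilon>) * n) \<le> f * y"
    and "f * (2 * ((1/2 - (1/f - 2) * \<epsilon>) * n)) \<le> f * (2 * z)"
    using arg_cong[OF cover, of "(*) f"] mult_left_mono[OF Un_Int, of f] f(1)
    by (simp_all add: algebra_simps)
  then show "(1 - 2 * \<epsilon> / f + 2 * \<epsilon>) * n \<le> y" and "(1/2 - (1/f - 2) * \<epsilon>) * n \<le> z"
    using f(1) by simp_all
qed

theorem lemma5:
  fixes E :: "'a set" and I1 I2 :: "'a set \<Rightarrow> bool" and OPT :: "'a set"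
    and f \<epsilon> :: real
  assumes "matroid E I1" and "matroid E I2"
    and "I1 OPT" and "I2 OPT"
    and "\<forall>S. I1 S \<and> I2 S \<longrightarrow> card S \<le> card OPT"
    and "0 < f" and "f \<le> 1/2" and "0 < \<epsilon>" and "\<epsilon> \<le> 1/2"
    and "exp_order E (\<lambda>\<pi>. real (card (greedy_at I1 I2 1 \<pi>)))
           \<le> (1/2 + \<epsilon>) * real (card OPT)"
  shows "exp_order E (\<lambda>\<pi>. real (card
            ((mspan E I1 (greedy_at I1 I2 f \<pi>) \<inter> OPT) \<inter>
             (mspan E I2 (greedy_at I1 I2 f \<pi>) \<inter> OPT))))
           \<le> 2 * \<epsilon> * real (card OPT)
    \<and> exp_order E (\<lambda>\<pi>. real (card
            ((mspan E I1 (greedy_at I1 I2 f \<pi>) \<inter> OPT) \<union>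
             (mspan E I2 (greedy_at I1 I2 f \<pi>) \<inter> OPT))))
           \<ge> (1 - 2 * \<epsilon> / f + 2 * \<epsilon>) * real (card OPT)
    \<and> exp_order E (\<lambda>\<pi>. real (card (greedy_at I1 I2 f \<pi>)))
           \<ge> (1/2 - (1/f - 2) * \<epsilon>) * real (card OPT)"
proof -
  note M = assms(1,2) and OPT = assms(3,4)
  have sub: "OPT \<subseteq> E" using matroid_indep_subset[OF assms(1,3)] .
  have fin: "finite E" "finite OPT" using matroid_finite[OF assms(1)] sub finite_subset by blast+
  have f: "0 < f" "f \<le> 1" using assms(6,7) by simp_all
  from greedy_bounds_arith[OF exp_order_doubly_spanned_le[OF M OPT] assms(10)
      exp_order_spanned_plus_unspanned[OF fin] exp_order_picked_le_doubly_spanned[OF M fin(2)]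
      exp_order_Un_Int_mspan_le[OF M OPT] exp_order_unspanned_le[OF M sub f] assms(6,7)]
  show ?thesis by simp
qed

end
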